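(* Let $(V,h)$ be a real quadratic space of odd dimension $d$ and let $\gamma^+,\gamma^-:\mathrm{Cl}(V,h)\to\mathrm{End}_\mathbb{C}(S)$ be the Pauli representations. Then $\gamma^+$ and $\gamma^-$ are weakly-faithful, and they are isomorphic in the category $\mathrm{\mathbb{C}lRep}_w$.
   Context: $(V,h)$: finite-dimensional real vector space with non-degenerate symmetric bilinear form of signature $(p,q)$, $d=p+q$; $\mathrm{Cl}(V,h)$ its real Clifford algebra and $\mathbb{C}\mathrm{l}(V,h)=\mathrm{Cl}(V,h)\otimes_\mathbb{R}\mathbb{C}$. For $d$ odd, fix an orientation of $V$ and let $\nu\in\mathrm{Cl}(V,h)$ be the corresponding Clifford volume element; it is central with $\nu^2=\sigma_{p,q}=(-1)^{(p-q-1)/2}$. Let $\nu_\mathbb{C}=\lambda\nu$ with $\lambda^2=\sigma_{p,q}$, so $\nu_\mathbb{C}$ is central in $\mathbb{C}\mathrm{l}(V,h)$ and $\nu_\mathbb{C}^2=1$. The Pauli representations are the two irreducible complex-algebra representations $\gamma^\pm_\mathbb{C}:\mathbb{C}\mathrm{l}(V,h)\to\mathrm{End}_\mathbb{C}(S)$ (with $\dim_\mathbb{C}S=2^{(d-1)/2}$) characterized by $\gamma^\pm_\mathbb{C}(\nu_\mathbb{C})=\pm\mathrm{id}_S$, restricted to $\mathrm{Cl}(V,h)$: $\gamma^\pm=\gamma^\pm_\mathbb{C}|_{\mathrm{Cl}(V,h)}$. A complex Clifford representation (unital real-algebra morphism $\mathrm{Cl}(V,h)\to\mathrm{End}_\mathbb{C}(S)$)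 is weakly-faithful if its restriction to $V$ is injective. $\mathrm{\mathbb{C}lRep}_w$ is the category whose objects are weakly-faithful complex Clifford representations (of arbitrary quadratic spaces) and whose morphisms $\gamma\to\gamma'$ are pairs $(\varphi_0,\varphi)$ of an isometry $\varphi_0:(V,h)\to(V',h')$ and a $\mathbb{C}$-linear map $\varphi:S\to S'$ with $\gamma'(\mathrm{Cl}(\varphi_0)(x))\circ\varphi=\varphi\circ\gamma(x)$ for all $x\in\mathrm{Cl}(V,h)$, where $\mathrm{Cl}(\varphi_0)$ is the algebra morphism extending $\varphi_0$. *)

theory Defs
  imports "HOL-Analysis.Analysis"
begin

text \<open>The quadratic space (V,h): V is a finite-dimensional real vector space (a type of
class euclidean_space; its inner product is NOT used), h a symmetric bilinear form.\<close>

definition quadratic_space :: "('v::euclidean_space \<Rightarrow> 'v \<Rightarrow> real) \<Rightarrow> bool" where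
  "quadratic_space h \<longleftrightarrow> bilinear h \<and> (\<forall>x y. h x y = h y x) \<and>
     (\<forall>x. (\<forall>y. h x y = 0) \<longrightarrow> x = 0)"

text \<open>An ordered h-orthonormal basis; it fixes the orientation of V.\<close>

definition orthonormal_basis :: "('v::euclidean_space \<Rightarrow> 'v \<Rightarrow> real) \<Rightarrow> 'v list \<Rightarrow> bool" where
  "orthonormal_basis h es \<longleftrightarrow> length es = DIM('v) \<and>
     (\<forall>i<length es. \<forall>j<length es. i \<noteq> j \<longrightarrow> h (es ! i) (es ! j) = 0) \<and>
     (\<forall>i<length es. h (es ! i) (es ! i) = 1 \<or> h (es ! i) (es ! i) = -1)"

definition sig_p :: "('v \<Rightarrow> 'v \<Rightarrow> real) \<Rightarrow> 'v list \<Rightarrow> nat" where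
  "sig_p h es = card {i. i < length es \<and> h (es ! i) (es ! i) = 1}"

definition sig_q :: "('v \<Rightarrow> 'v \<Rightarrow> real) \<Rightarrow> 'v list \<Rightarrow> nat" where
  "sig_q h es = card {i. i < length es \<and> h (es ! i) (es ! i) = -1}"

definition sigma_pq :: "('v \<Rightarrow> 'v \<Rightarrow> real) \<Rightarrow> 'v list \<Rightarrow> real" where
  "sigma_pq h es = (-1) powi ((int (sig_p h es) - int (sig_q h es) - 1) div 2)"

text \<open>A unital real-algebra morphism
Cl(V,h) -> End_C(S) is (by the universal property of the Clifford algebra) the same as
its restriction to V: a real-linear map gamma with gamma(v)^2 = h(v,v) id.
We represent Clifford representations by this restriction.\<close>

definition clifford_rep :: "('v::euclidean_space \<Rightarrow> 'v \<Rightarrow> real) \<Rightarrow> ('v \<Rightarrow> complex^'n^'n) \<Rightarrow> bool" where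
  "clifford_rep h \<gamma> \<longleftrightarrow> linear \<gamma> \<and> (\<forall>v. \<gamma> v ** \<gamma> v = mat (complex_of_real (h v v)))"

definition weakly_faithful :: "('v::euclidean_space \<Rightarrow> complex^'n^'n) \<Rightarrow> bool" where
  "weakly_faithful \<gamma> \<longleftrightarrow> inj \<gamma>"

definition vol_image :: "('v \<Rightarrow> complex^'n^'n) \<Rightarrow> 'v list \<Rightarrow> complex^'n^'n" where
  "vol_image \<gamma> es = foldr (\<lambda>e M. \<gamma> e ** M) es (mat 1)"

text \<open>Complex subspaces of S invariant under the representation (the complexified
representation is generated over C by gamma(V)); irreducibility.\<close>

definition invariant_csubspace :: "('v \<Rightarrow> complex^'n^'n) \<Rightarrow> (complex^'n) set \<Rightarrow> bool" where
  "invariant_csubspace \<gamma> W \<longleftrightarrow> 0 \<in> W \<and> (\<forall>x\<in>W. \<forall>y\<in>W. x + y \<in> W) \<and>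
     (\<forall>c. \<forall>x\<in>W. c *s x \<in> W) \<and> (\<forall>v. \<forall>x\<in>W. \<gamma> v *v x \<in> W)"

definition irreducible_rep :: "('v \<Rightarrow> complex^'n^'n) \<Rightarrow> bool" where
  "irreducible_rep \<gamma> \<longleftrightarrow> (\<forall>W. invariant_csubspace \<gamma> W \<longrightarrow> W = {0} \<or> W = UNIV)"

text \<open>Pauli representation with sign s (s = 1 for gamma^+, s = -1 for gamma^-), with
nu_C = lam * nu, lam^2 = sigma_{p,q}: irreducible, dim S = 2^((d-1)/2), and
gamma_C(nu_C) = s id.\<close>

definition pauli_rep :: "('v::euclidean_space \<Rightarrow> 'v \<Rightarrow> real) \<Rightarrow> 'v list \<Rightarrow> complex \<Rightarrow> complex
     \<Rightarrow> ('v \<Rightarrow> complex^'n^'n) \<Rightarrow> bool" where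
  "pauli_rep h es lam s \<gamma> \<longleftrightarrow> clifford_rep h \<gamma> \<and> irreducible_rep \<gamma> \<and>
     CARD('n) = 2 ^ ((DIM('v) - 1) div 2) \<and>
     mat lam ** vol_image \<gamma> es = mat s"

definition isometry :: "('v::euclidean_space \<Rightarrow> 'v \<Rightarrow> real) \<Rightarrow> ('w::euclidean_space \<Rightarrow> 'w \<Rightarrow> real)
     \<Rightarrow> ('v \<Rightarrow> 'w) \<Rightarrow> bool" where
  "isometry h h' f \<longleftrightarrow> linear f \<and> (\<forall>x y. h' (f x) (f y) = h x y)"

text \<open>Morphisms (phi0, phi): the intertwining condition on all of Cl(V,h) is equivalent to
the condition on the generators V, since Cl(phi0) is the algebra morphism extending phi0.\<close>

definition clrep_mor :: "('v::euclidean_space \<Rightarrow> 'v \<Rightarrow> real) \<Rightarrow> ('v \<Rightarrow> complex^'n^'n)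
     \<Rightarrow> ('w::euclidean_space \<Rightarrow> 'w \<Rightarrow> real) \<Rightarrow> ('w \<Rightarrow> complex^'m^'m)
     \<Rightarrow> ('v \<Rightarrow> 'w) \<Rightarrow> complex^'n^'m \<Rightarrow> bool" where
  "clrep_mor h \<gamma> h' \<gamma>' f0 f \<longleftrightarrow>
     quadratic_space h \<and> quadratic_space h' \<and>
     clifford_rep h \<gamma> \<and> weakly_faithful \<gamma> \<and> clifford_rep h' \<gamma>' \<and> weakly_faithful \<gamma>' \<and>
     isometry h h' f0 \<and> (\<forall>v. \<gamma>' (f0 v) ** f = f ** \<gamma> v)"

definition clrep_iso :: "('v::euclidean_space \<Rightarrow> 'v \<Rightarrow> real) \<Rightarrow> ('v \<Rightarrow> complex^'n^'n)
     \<Rightarrow> ('w::euclidean_space \<Rightarrow> 'w \<Rightarrow> real) \<Rightarrow> ('w \<Rightarrow> complex^'m^'m) \<Rightarrow> bool" where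
  "clrep_iso h \<gamma> h' \<gamma>' \<longleftrightarrow> (\<exists>f0 f g0 g.
     clrep_mor h \<gamma> h' \<gamma>' f0 f \<and> clrep_mor h' \<gamma>' h \<gamma> g0 g \<and>
     g0 \<circ> f0 = id \<and> f0 \<circ> g0 = id \<and> g ** f = mat 1 \<and> f ** g = mat 1)"

end

theory Submission
  imports Defs
begin

(* If gamma is a Clifford representation then so is v |-> - gamma v, and for odd d it sends the
   volume element to minus its image under gamma. Hence gm and v |-> - gp v are irreducible
   representations on which nu_C acts by the same scalar, and an invertible X with
   gm v X = - X gp v for all v makes (-id, X) an isomorphism from gp to gm.

   Such an X, intertwining two representations gamma and gamma', is built along an orthonormal
   basis. If X intertwines the images of the vectors of a set E and k is a further basis vector,
   then Y = h(k,k) X + gamma k X gamma' k intertwines E and k; if instead Y = 0, then X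
   anti-intertwines k, and gamma k gamma l X works for a spare basis vector l. This reaches all
   basis vectors but the last one l; for l, the volume element (the same scalar on both sides)
   takes over. Finally the kernel of X is an invariant subspace, so X is invertible by
   irreducibility. *)

lemma matrix_add_rdistrib: "((A::'a::semiring_1^'n^'m) + B) ** C = A ** C + B ** C"
  by (vector matrix_matrix_mult_def sum.distrib[symmetric] field_simps)

lemma matrix_neg_left: "(- (A::'a::ring_1^'n^'m)) ** B = - (A ** B)"
  by (simp add: matrix_matrix_mult_def vec_eq_iff sum_negf)

lemma matrix_neg_right: "(A::'a::ring_1^'n^'m) ** (- B) = - (A ** B)"
  by (simp add: matrix_matrix_mult_def vec_eq_iff sum_negf)

lemma matrix_scaleR_left: "(c *\<^sub>R (A::'a::real_algebra_1^'n^'m)) ** B = c *\<^sub>R (A ** B)"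
  by (simp add: scalar_matrix_assoc)

lemma matrix_scaleR_right: "(A::'a::real_algebra_1^'n^'m) ** (c *\<^sub>R B) = c *\<^sub>R (A ** B)"
  by (simp add: matrix_scalar_ac scalar_matrix_assoc)

lemma mat_mult_nth: "(mat c ** A) $ i $ j = c * A $ i $ j"
  by (simp add: matrix_matrix_mult_def mat_def if_distrib if_distribR cong: if_cong)

lemma matrix_mult_mat_nth: "(A ** mat c) $ i $ j = A $ i $ j * c"
  by (simp add: matrix_matrix_mult_def mat_def if_distrib if_distribR cong: if_cong)

lemma matrix_mul_mat_commute: "A ** mat c = mat c ** (A :: 'a::comm_semiring_1^'n^'n)"
  by (simp add: vec_eq_iff mat_mult_nth matrix_mult_mat_nth mult.commute)

lemma mat_of_real: "mat (of_real c) = c *\<^sub>R (mat 1 :: 'a::real_algebra_1^'n^'n)"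
  by (simp add: mat_def vec_eq_iff of_real_def)

lemma mat_eq_0_iff: "(mat c :: 'a::zero^'n^'n) = 0 \<longleftrightarrow> c = 0"
proof
  assume "mat c = (0::'a^'n^'n)"
  moreover have "(mat c :: 'a^'n^'n) $ i $ i = c" for i
    by (simp add: mat_def)
  ultimately show "c = 0"
    by (metis zero_index)
qed simp

lemma mat_mult_cancel:
  fixes A B :: "'a::field^'n^'n"
  assumes "mat c ** A = mat c ** B" and "c \<noteq> 0"
  shows "A = B"
  using assms by (simp add: vec_eq_iff mat_mult_nth)

(* matrix_mul_assoc normalises products to left-nested form, in which a relation P ** Q = R is
   only visible at the end of a product; this variant makes it usable there. *)
lemma matrix_mul_assoc_cong: "P ** Q = R \<Longrightarrow> M ** P ** Q = M ** R"
  by (simp add: matrix_mul_assoc[symmetric])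

lemmas matrix_mult_simps = matrix_add_ldistrib matrix_add_rdistrib matrix_neg_left matrix_neg_right
  matrix_scaleR_left matrix_scaleR_right matrix_mul_assoc

lemma clifford_rep_linear: "clifford_rep h \<gamma> \<Longrightarrow> linear \<gamma>"
  by (simp add: clifford_rep_def)

lemma clifford_rep_square: "clifford_rep h \<gamma> \<Longrightarrow> \<gamma> v ** \<gamma> v = h v v *\<^sub>R mat 1"
  by (simp add: clifford_rep_def mat_of_real)

lemma clifford_rep_anticommute:
  assumes "quadratic_space h" and "clifford_rep h \<gamma>"
  shows "\<gamma> u ** \<gamma> v + \<gamma> v ** \<gamma> u = (2 * h u v) *\<^sub>R mat 1"
proof -
  have "bilinear h" and "h v u = h u v"
    using assms(1) by (auto simp: quadratic_space_def)
  then have "h (u + v) (u + v) = h u u + 2 * h u v + h v v"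
    by (simp add: bilinear_ladd bilinear_radd)
  moreover have "\<gamma> (u + v) = \<gamma> u + \<gamma> v"
    using clifford_rep_linear[OF assms(2)] by (rule linear_add)
  ultimately show ?thesis
    using clifford_rep_square[OF assms(2), of "u + v"] clifford_rep_square[OF assms(2), of u]
      clifford_rep_square[OF assms(2), of v]
    by (simp add: matrix_mult_simps algebra_simps)
qed

lemma clifford_rep_anticommute_orthogonal:
  assumes "quadratic_space h" and "clifford_rep h \<gamma>" and "h u v = 0"
  shows "\<gamma> u ** \<gamma> v = - (\<gamma> v ** \<gamma> u)"
  using clifford_rep_anticommute[OF assms(1,2), of u v] assms(3) by (simp add: eq_neg_iff_add_eq_0)

lemma clifford_rep_weakly_faithful:
  fixes \<gamma> :: "'v::euclidean_space \<Rightarrow> complex^'n^'n"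
  assumes "quadratic_space h" and "clifford_rep h \<gamma>"
  shows "weakly_faithful \<gamma>"
proof -
  have "x = 0" if "\<gamma> x = 0" for x
  proof -
    have "h x y = 0" for y
      using clifford_rep_anticommute[OF assms, of x y] that by (simp add: mat_eq_0_iff)
    then show ?thesis
      using assms(1) by (simp add: quadratic_space_def)
  qed
  then show ?thesis
    unfolding weakly_faithful_def using linear_injective_0[OF clifford_rep_linear[OF assms(2)]]
    by blast
qed

definition anisotropic_orthogonal :: "('v \<Rightarrow> 'v \<Rightarrow> real) \<Rightarrow> 'v set \<Rightarrow> bool"
  where "anisotropic_orthogonal h F \<longleftrightarrow>
    (\<forall>u\<in>F. \<forall>v\<in>F. u \<noteq> v \<longrightarrow> h u v = 0) \<and> (\<forall>v\<in>F. h v v \<noteq> 0)"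

lemma orthonormal_basis_anisotropic_orthogonal:
  assumes "orthonormal_basis h es"
  shows "anisotropic_orthogonal h (set es)"
  using assms unfolding orthonormal_basis_def anisotropic_orthogonal_def
  by (metis in_set_conv_nth zero_neq_neg_one zero_neq_one)

lemma orthonormal_basis_distinct:
  assumes "orthonormal_basis h es"
  shows "distinct es"
  using assms unfolding orthonormal_basis_def distinct_conv_nth
  by (metis zero_neq_neg_one zero_neq_one)

lemma anisotropic_orthogonal_independent:
  assumes "bilinear h" and "anisotropic_orthogonal h F"
  shows "independent F"
proof
  assume "dependent F"
  then obtain T u v where T: "finite T" "T \<subseteq> F" "(\<Sum>w\<in>T. u w *\<^sub>R w) = 0"
    and v: "v \<in> T" "u v \<noteq> 0"
    unfolding dependent_explicit by blast
  have lin: "linear (\<lambda>x. h x v)"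
    using assms(1) by (simp add: bilinear_def)
  have "0 = h (\<Sum>w\<in>T. u w *\<^sub>R w) v"
    using T(3) bilinear_lzero[OF assms(1)] by simp
  also have "\<dots> = (\<Sum>w\<in>T. u w * h w v)"
    by (simp add: linear_sum[OF lin] linear_scale[OF lin])
  also have "\<dots> = u v * h v v"
  proof -
    have "h w v = 0" if "w \<in> T" "w \<noteq> v" for w
      using that v(1) T(2) assms(2) unfolding anisotropic_orthogonal_def by blast
    then show ?thesis
      by (simp add: sum.remove[OF T(1) v(1)] sum.neutral)
  qed
  finally show False
    using v T(2) assms(2) by (auto simp: anisotropic_orthogonal_def)
qed

lemma span_orthonormal_basis:
  fixes h :: "'v::euclidean_space \<Rightarrow> 'v \<Rightarrow> real"
  assumes "quadratic_space h" and "orthonormal_basis h es"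
  shows "span (set es) = UNIV"
proof -
  have "independent (set es)"
    by (rule anisotropic_orthogonal_independent)
      (use assms in \<open>auto simp: quadratic_space_def orthonormal_basis_anisotropic_orthogonal\<close>)
  moreover have "card (set es) = DIM('v)"
    using assms(2) orthonormal_basis_distinct[OF assms(2)]
    by (simp add: distinct_card orthonormal_basis_def)
  ultimately show ?thesis
    using card_ge_dim_independent[of "set es" UNIV] by auto
qed

lemma sandwich_intertwines:
  fixes A B C D X :: "'a::real_algebra_1^'n^'n"
  assumes "C ** X = X ** D" "C ** A = - (A ** C)" "D ** B = - (B ** D)"
  shows "C ** (A ** X ** B) = A ** X ** B ** D"
  by (simp add: matrix_mult_simps assms matrix_mul_assoc_cong[OF assms(1)]
      matrix_mul_assoc_cong[OF assms(2)] matrix_mul_assoc_cong[OF assms(3)])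

lemma symmetrized_intertwines:
  fixes A B X :: "'a::real_algebra_1^'n^'n"
  assumes "A ** A = c *\<^sub>R mat 1" "B ** B = c *\<^sub>R mat 1"
  shows "A ** (c *\<^sub>R X + A ** X ** B) = (c *\<^sub>R X + A ** X ** B) ** B"
  by (simp add: matrix_mult_simps assms matrix_mul_assoc_cong[OF assms(1)]
      matrix_mul_assoc_cong[OF assms(2)] add.commute)

lemma product_intertwines:
  fixes A A' C D X :: "'a::real_algebra_1^'n^'n"
  assumes "C ** X = X ** D" "C ** A = - (A ** C)" "C ** A' = - (A' ** C)"
  shows "C ** (A ** A' ** X) = A ** A' ** X ** D"
  by (simp add: matrix_mult_simps assms matrix_mul_assoc_cong[OF assms(1)]
      matrix_mul_assoc_cong[OF assms(2)] matrix_mul_assoc_cong[OF assms(3)])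

lemma symmetrized_eq_0_anticommutes:
  fixes A B X :: "'a::real_algebra_1^'n^'n"
  assumes "c *\<^sub>R X + A ** X ** B = 0" "B ** B = c *\<^sub>R mat 1" "c \<noteq> 0"
  shows "A ** X = - (X ** B)"
proof -
  have "(c *\<^sub>R X + A ** X ** B) ** B = 0" using assms(1) by simp
  then have "c *\<^sub>R (A ** X + X ** B) = 0"
    by (simp add: matrix_mult_simps matrix_mul_assoc_cong[OF assms(2)] algebra_simps)
  then show ?thesis using assms(3) by (simp add: eq_neg_iff_add_eq_0)
qed

lemma anticommuting_product_intertwines:
  fixes A A' B X :: "'a::real_algebra_1^'n^'n"
  assumes "A ** X = - (X ** B)" "A ** A = c *\<^sub>R mat 1" "A ** A' = - (A' ** A)"
  shows "A ** (A ** A' ** X) = A ** A' ** X ** B"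
proof -
  have XB: "X ** B = - (A ** X)" and A'A: "A' ** A = - (A ** A')"
    using assms(1,3) by simp_all
  show ?thesis
    by (simp add: matrix_mult_simps matrix_mul_assoc_cong[OF assms(2)] matrix_mul_assoc_cong[OF XB]
        matrix_mul_assoc_cong[OF A'A])
qed

lemma scalar_squares_product_ne_0:
  fixes A A' X :: "'a::real_algebra_1^'n^'n"
  assumes "A ** A = a *\<^sub>R mat 1" "A' ** A' = a' *\<^sub>R mat 1" "a \<noteq> 0" "a' \<noteq> 0" "X \<noteq> 0"
  shows "A ** A' ** X \<noteq> 0"
proof
  assume "A ** A' ** X = 0"
  then have "A' ** A ** (A ** A' ** X) = 0"
    by simp
  moreover have "A' ** A ** (A ** A' ** X) = (a * a') *\<^sub>R X"
    by (simp add: matrix_mult_simps matrix_mul_assoc_cong[OF assms(1)] assms(2))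
  ultimately show False
    using assms(3-5) by simp
qed

lemma intertwiner_extend:
  fixes \<gamma> \<gamma>' :: "'v::euclidean_space \<Rightarrow> complex^'n^'n"
  assumes qs: "quadratic_space h" and cr: "clifford_rep h \<gamma>" and cr': "clifford_rep h \<gamma>'"
    and F: "anisotropic_orthogonal h F" "insert k (insert l E) \<subseteq> F" "k \<noteq> l" "k \<notin> E" "l \<notin> E"
    and X: "X \<noteq> 0" "\<forall>e\<in>E. \<gamma> e ** X = X ** \<gamma>' e"
  shows "\<exists>X'. X' \<noteq> 0 \<and> (\<forall>e\<in>insert k E. \<gamma> e ** X' = X' ** \<gamma>' e)"
proof -
  have orth: "h u v = 0" if "u \<in> insert k (insert l E)" "v \<in> insert k (insert l E)" "u \<noteq> v" for u v
    using that F(1,2) unfolding anisotropic_orthogonal_def by blast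
  have aniso: "h k k \<noteq> 0" "h l l \<noteq> 0"
    using F(1,2) unfolding anisotropic_orthogonal_def by auto
  note anti = clifford_rep_anticommute_orthogonal[OF qs cr orth]
    and anti' = clifford_rep_anticommute_orthogonal[OF qs cr' orth]
  define Y where "Y = h k k *\<^sub>R X + \<gamma> k ** X ** \<gamma>' k"
  show ?thesis
  proof (cases "Y = 0")
    case False
    have "\<gamma> k ** Y = Y ** \<gamma>' k"
      unfolding Y_def by (rule symmetrized_intertwines) (simp_all add: clifford_rep_square cr cr')
    moreover have "\<gamma> e ** Y = Y ** \<gamma>' e" if "e \<in> E" for e
    proof -
      have "e \<noteq> k"
        using that F(4) by blast
      then have "\<gamma> e ** (\<gamma> k ** X ** \<gamma>' k) = \<gamma> k ** X ** \<gamma>' k ** \<gamma>' e"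
        using that X(2) anti[of e k] anti'[of e k] by (intro sandwich_intertwines) auto
      then show ?thesis
        unfolding Y_def using X(2) that
        by (simp only: matrix_add_ldistrib matrix_add_rdistrib matrix_scaleR_left
            matrix_scaleR_right)
    qed
    ultimately show ?thesis
      using False by blast
  next
    case True
    then have flip: "\<gamma> k ** X = - (X ** \<gamma>' k)"
      using aniso(1)
      by (intro symmetrized_eq_0_anticommutes) (simp_all add: Y_def clifford_rep_square cr')
    define Z where "Z = \<gamma> k ** \<gamma> l ** X"
    have "\<gamma> k ** Z = Z ** \<gamma>' k"
      unfolding Z_def using flip clifford_rep_square[OF cr] anti[of k l] F(3)
      by (intro anticommuting_product_intertwines) auto
    moreover have "\<gamma> e ** Z = Z ** \<gamma>' e" if "e \<in> E" for e
      unfolding Z_def using that X(2) F(4,5) anti[of e k] anti[of e l]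
      by (intro product_intertwines) auto
    moreover have "Z \<noteq> 0"
      unfolding Z_def
      by (rule scalar_squares_product_ne_0[OF clifford_rep_square[OF cr] clifford_rep_square[OF cr]
            aniso X(1)])
    ultimately show ?thesis
      by blast
  qed
qed

lemma anisotropic_orthogonal_intertwiner:
  fixes \<gamma> \<gamma>' :: "'v::euclidean_space \<Rightarrow> complex^'n^'n"
  assumes "quadratic_space h" "clifford_rep h \<gamma>" "clifford_rep h \<gamma>'"
    and "anisotropic_orthogonal h F" "l \<in> F" "finite E" "E \<subseteq> F - {l}"
  shows "\<exists>X. X \<noteq> 0 \<and> (\<forall>e\<in>E. \<gamma> e ** X = X ** \<gamma>' e)"
  using assms(6,7)
proof (induction E rule: finite_induct)
  case empty
  show ?case
    by (rule exI[of _ "mat 1"]) (simp add: mat_eq_0_iff)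
next
  case (insert k E)
  then obtain X where "X \<noteq> 0" "\<forall>e\<in>E. \<gamma> e ** X = X ** \<gamma>' e"
    by blast
  moreover have "insert k (insert l E) \<subseteq> F" "k \<noteq> l" "l \<notin> E"
    using insert.prems assms(5) by auto
  ultimately show ?case
    using intertwiner_extend[OF assms(1-4)] insert.hyps(2) by blast
qed

lemma vol_image_snoc: "vol_image \<gamma> (es @ [e]) = vol_image \<gamma> es ** \<gamma> e"
  by (induction es) (simp_all add: vol_image_def matrix_mul_assoc)

lemma vol_image_intertwines:
  assumes "\<forall>e\<in>set es. \<gamma> e ** X = X ** \<gamma>' e"
  shows "vol_image \<gamma> es ** X = X ** vol_image \<gamma>' es"
  using assms
proof (induction es)
  case (Cons a es)
  have "vol_image \<gamma> (a # es) ** X = \<gamma> a ** (vol_image \<gamma> es ** X)"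
    by (simp add: vol_image_def matrix_mul_assoc)
  also have "\<dots> = \<gamma> a ** X ** vol_image \<gamma>' es"
    using Cons by (simp add: matrix_mul_assoc)
  also have "\<dots> = X ** vol_image \<gamma>' (a # es)"
    using Cons.prems by (simp add: vol_image_def matrix_mul_assoc)
  finally show ?case .
qed (simp add: vol_image_def)

lemma intertwines_last_generator:
  fixes P P' A A' X :: "'a::real_field^'n^'n"
  assumes "P ** X = X ** P'" "A ** A = c *\<^sub>R mat 1" "A' ** A' = c *\<^sub>R mat 1"
    and "mat lam ** (P ** A) = mat s" "mat lam ** (P' ** A') = mat s" "s \<noteq> 0"
  shows "A ** X = X ** A'"
proof -
  have solve: "mat s ** Q = c *\<^sub>R (mat lam ** R)"
    if "mat lam ** (R ** Q) = mat s" "Q ** Q = c *\<^sub>R mat 1" for Q R :: "'a^'n^'n"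
  proof -
    have "mat s ** Q = mat lam ** R ** (Q ** Q)"
      by (simp flip: that(1) add: matrix_mul_assoc)
    then show ?thesis
      by (simp add: that(2) matrix_scaleR_right)
  qed
  have "mat s ** (A ** X) = c *\<^sub>R (mat lam ** (P ** X))"
    by (simp add: matrix_mul_assoc solve[OF assms(4,2)] matrix_scaleR_left)
  also have "\<dots> = X ** (c *\<^sub>R (mat lam ** P'))"
    by (simp add: assms(1) matrix_mul_assoc matrix_mul_mat_commute matrix_scaleR_right)
  also have "\<dots> = mat s ** (X ** A')"
    by (simp add: solve[OF assms(5,3), symmetric] matrix_mul_assoc matrix_mul_mat_commute)
  finally show ?thesis
    using assms(6) by (rule mat_mult_cancel)
qed

lemma intertwines_on_span:
  fixes \<gamma> \<gamma>' :: "'v::real_vector \<Rightarrow> 'a::real_algebra_1^'n^'n"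
  assumes "linear \<gamma>" "linear \<gamma>'" "\<forall>e\<in>B. \<gamma> e ** X = X ** \<gamma>' e" "v \<in> span B"
  shows "\<gamma> v ** X = X ** \<gamma>' v"
proof (rule linear_eq_on_span[where f = "\<lambda>v. \<gamma> v ** X" and g = "\<lambda>v. X ** \<gamma>' v"])
  show "linear (\<lambda>v. \<gamma> v ** X)"
    using assms(1) by (intro linearI) (simp_all add: linear_add linear_scale matrix_mult_simps)
  show "linear (\<lambda>v. X ** \<gamma>' v)"
    using assms(2) by (intro linearI) (simp_all add: linear_add linear_scale matrix_mult_simps)
qed (use assms(3,4) in auto)

lemma clifford_rep_intertwiner_exists:
  fixes \<gamma> \<gamma>' :: "'v::euclidean_space \<Rightarrow> complex^'n^'n"
  assumes qs: "quadratic_space h" and cr: "clifford_rep h \<gamma>" and cr': "clifford_rep h \<gamma>'"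
    and ob: "orthonormal_basis h es"
    and vol: "mat lam ** vol_image \<gamma> es = mat s" and vol': "mat lam ** vol_image \<gamma>' es = mat s"
    and "s \<noteq> 0"
  shows "\<exists>X. X \<noteq> 0 \<and> (\<forall>v. \<gamma> v ** X = X ** \<gamma>' v)"
proof -
  have "es \<noteq> []"
    using ob by (auto simp: orthonormal_basis_def)
  then obtain L l where es: "es = L @ [l]"
    by (metis append_butlast_last_id)
  have "l \<notin> set L"
    using orthonormal_basis_distinct[OF ob] es by simp
  then obtain X where "X \<noteq> 0" and XL: "\<forall>e\<in>set L. \<gamma> e ** X = X ** \<gamma>' e"
    using anisotropic_orthogonal_intertwiner[OF qs cr cr'
        orthonormal_basis_anisotropic_orthogonal[OF ob], of l "set L"] es
    by auto
  have "\<gamma> l ** X = X ** \<gamma>' l"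
    by (rule intertwines_last_generator[OF vol_image_intertwines[OF XL]
          clifford_rep_square[OF cr] clifford_rep_square[OF cr'] _ _ \<open>s \<noteq> 0\<close>])
      (use vol vol' in \<open>simp_all add: es vol_image_snoc\<close>)
  then have "\<forall>e\<in>set es. \<gamma> e ** X = X ** \<gamma>' e"
    using XL es by auto
  then have "\<gamma> v ** X = X ** \<gamma>' v" for v
    using intertwines_on_span[OF clifford_rep_linear[OF cr] clifford_rep_linear[OF cr']]
      span_orthonormal_basis[OF qs ob] by blast
  then show ?thesis
    using \<open>X \<noteq> 0\<close> by blast
qed

lemma intertwiner_invertible:
  fixes X :: "complex^'n^'n"
  assumes "irreducible_rep \<gamma>'" and "\<forall>v. \<gamma> v ** X = X ** \<gamma>' v" and "X \<noteq> 0"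
  shows "\<exists>Y. Y ** X = mat 1 \<and> X ** Y = mat 1"
proof -
  let ?K = "{x. X *v x = 0}"
  have "invariant_csubspace \<gamma>' ?K"
    unfolding invariant_csubspace_def
  proof (intro conjI ballI allI)
    fix v x assume "x \<in> ?K"
    have "X *v (\<gamma>' v *v x) = (\<gamma> v ** X) *v x"
      using assms(2) by (simp add: matrix_vector_mul_assoc)
    also have "\<dots> = 0"
      using \<open>x \<in> ?K\<close> by (simp flip: matrix_vector_mul_assoc)
    finally show "\<gamma>' v *v x \<in> ?K"
      by simp
  qed (auto simp: matrix_vector_right_distrib vec.scale)
  moreover have "?K \<noteq> UNIV"
    using assms(3) matrix_eq[of X 0] by auto
  ultimately have "\<forall>x. X *v x = 0 \<longrightarrow> x = 0"
    using assms(1) unfolding irreducible_rep_def by blast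
  then show ?thesis
    using matrix_left_invertible_ker matrix_left_right_inverse by blast
qed

lemma clifford_rep_uminus: "clifford_rep h \<gamma> \<Longrightarrow> clifford_rep h (\<lambda>v. - \<gamma> v)"
  by (simp add: clifford_rep_def linear_compose_neg matrix_neg_left matrix_neg_right)

lemma invariant_csubspace_uminus:
  fixes \<gamma> :: "'v \<Rightarrow> complex^'n^'n"
  shows "invariant_csubspace (\<lambda>v. - \<gamma> v) W \<longleftrightarrow> invariant_csubspace \<gamma> W"
proof -
  have "(- M) *v x \<in> W \<longleftrightarrow> M *v x \<in> W" if "\<forall>c. \<forall>y\<in>W. c *s y \<in> W" for M :: "complex^'n^'n" and x
  proof -
    have "(- M) *v x = (- 1) *s (M *v x)" "M *v x = (- 1) *s ((- M) *v x)"
      by (simp_all add: vec_eq_iff matrix_vector_mult_def sum_negf)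
    then show ?thesis
      using that by metis
  qed
  then show ?thesis
    unfolding invariant_csubspace_def by blast
qed

lemma irreducible_rep_uminus: "irreducible_rep \<gamma> \<Longrightarrow> irreducible_rep (\<lambda>v. - \<gamma> v)"
  by (simp add: irreducible_rep_def invariant_csubspace_uminus)

lemma vol_image_uminus: "vol_image (\<lambda>v. - \<gamma> v) es = (- 1) ^ length es *\<^sub>R vol_image \<gamma> es"
  by (induction es) (simp_all add: vol_image_def matrix_neg_left matrix_scaleR_right)

lemma isometry_uminus: "bilinear h \<Longrightarrow> isometry h h uminus"
  by (simp add: isometry_def linear_uminus bilinear_lneg bilinear_rneg)

lemma clrep_isoI:
  assumes "clrep_mor h \<gamma> h' \<gamma>' f0 X" and "isometry h' h g0" and "g0 \<circ> f0 = id" and "f0 \<circ> g0 = id"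
    and "Y ** X = mat 1" and "X ** Y = mat 1"
  shows "clrep_iso h \<gamma> h' \<gamma>'"
proof -
  have "\<gamma> (g0 w) ** Y = Y ** \<gamma>' w" for w
  proof -
    have "\<gamma>' w ** X = X ** \<gamma> (g0 w)"
      using assms(1,4) unfolding clrep_mor_def by (metis comp_apply id_apply)
    then have "Y ** (\<gamma>' w ** X) ** Y = Y ** (X ** \<gamma> (g0 w)) ** Y"
      by simp
    then show ?thesis
      by (simp add: matrix_mul_assoc assms(5)) (simp flip: matrix_mul_assoc add: assms(6))
  qed
  then have "clrep_mor h' \<gamma>' h \<gamma> g0 Y"
    using assms(1,2) unfolding clrep_mor_def by blast
  then show ?thesis
    unfolding clrep_iso_def using assms by blast
qed

theorem proposition4p3:
  fixes h :: "'v::euclidean_space \<Rightarrow> 'v \<Rightarrow> real"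
    and es :: "'v list" and lam :: complex
    and gp gm :: "'v \<Rightarrow> complex^'n^'n"
  assumes "quadratic_space h"
    and "odd DIM('v)"
    and "orthonormal_basis h es"
    and "lam ^ 2 = complex_of_real (sigma_pq h es)"
    and "pauli_rep h es lam 1 gp"
    and "pauli_rep h es lam (-1) gm"
  shows "weakly_faithful gp \<and> weakly_faithful gm \<and> clrep_iso h gp h gm"
proof -
  have gp: "clifford_rep h gp" "irreducible_rep gp" "mat lam ** vol_image gp es = mat 1"
    and gm: "clifford_rep h gm" "mat lam ** vol_image gm es = mat (- 1)"
    using assms(5,6) by (auto simp: pauli_rep_def)
  have wf: "weakly_faithful gp" "weakly_faithful gm"
    using clifford_rep_weakly_faithful assms(1) gp(1) gm(1) by blast+
  let ?gn = "\<lambda>v. - gp v"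
  have "odd (length es)"
    using assms(2,3) by (simp add: orthonormal_basis_def)
  then have "mat lam ** vol_image ?gn es = mat (- 1)"
    by (simp add: vol_image_uminus gp(3) matrix_neg_right mat_of_real[of "- 1", simplified])
  then obtain X where "X \<noteq> 0" and X: "\<forall>v. gm v ** X = X ** ?gn v"
    using clifford_rep_intertwiner_exists[OF assms(1) gm(1) clifford_rep_uminus[OF gp(1)] assms(3)
        gm(2)]
    by auto
  then obtain Y where "Y ** X = mat 1" "X ** Y = mat 1"
    using intertwiner_invertible[OF irreducible_rep_uminus[OF gp(2)]] by blast
  moreover have "clrep_mor h gp h gm uminus X"
    using X assms(1) gp(1) gm(1) wf isometry_uminus[of h]
      linear_neg[OF clifford_rep_linear[OF gm(1)]]
    by (auto simp: clrep_mor_def quadratic_space_def matrix_neg_left matrix_neg_right)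
  ultimately show ?thesis
    using clrep_isoI[of h gp h gm uminus X uminus] isometry_uminus[of h] assms(1) wf
    by (auto simp: quadratic_space_def)
qed

end
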